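(* Let $c > 0$, $\rho > 0$, and $\mathbf{d}\in\mathbb{R}^n$ with $\eta := \|\mathbf{d}\|_2 > 0$. Set $D = \dfrac{c}{\rho\,\eta^3}$. Then the polynomial $F(\tau) = \tau^3 - \tau^2 - D$ has exactly one real root, given by $$\tau^* = \frac13 + \frac13\left(C + \frac1C\right), \qquad C = \sqrt[3]{\frac{27D + 2 + \sqrt{(27D+2)^2 - 4}}{2}},$$ and $\tau^*>0$. Moreover, the problem $$\min_{\mathbf{y}\in\mathbb{R}^n\setminus\{\mathbf{0}\}} \ \frac{c}{\|\mathbf{y}\|_2} + \frac{\rho}{2}\|\mathbf{y}-\mathbf{d}\|_2^2$$ has the unique minimizer $\mathbf{y} = \tau^*\mathbf{d}$.
   Context: $\sqrt[3]{\cdot}$ denotes the real cube root. *)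

theory Defs
  imports "HOL-Analysis.Analysis"
begin

end

theory Submission imports Defs begin

text \<open>
  Cardano's formula: the substitution \<open>\<tau> = (1 + s)/3\<close> turns \<open>\<tau>\<^sup>3 - \<tau>\<^sup>2 = D\<close> into
  \<open>s\<^sup>3 - 3 s = 27 D + 2\<close>, which \<open>s = C + 1/C\<close> solves as soon as \<open>C\<^sup>3 + 1/C\<^sup>3 = 27 D + 2\<close>.
  Any real root exceeds 1, and on \<open>(1, \<infinity>)\<close> the cubic is strictly increasing.

  For the minimisation, split \<open>y\<close> into its length \<open>r = t \<eta>\<close> and its deviation from the ray
  through \<open>d\<close>: the objective equals \<open>\<rho> \<eta>\<^sup>2 (D/t + (t - 1)\<^sup>2/2)\<close> plus a nonnegative multiple
  of \<open>\<parallel>y - t d\<parallel>\<^sup>2\<close>. The one-dimensional part is minimised exactly at the root \<open>t = \<tau>\<close>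
  of its derivative \<open>t - 1 - D/t\<^sup>2\<close>.
\<close>

lemma quadratic_root_plus_inverse:
  fixes B :: real
  assumes "B > 2"
  defines "A \<equiv> (B + sqrt (B\<^sup>2 - 4)) / 2"
  shows "A > 1" and "A + 1 / A = B"
proof -
  define S where "S = sqrt (B\<^sup>2 - 4)"
  have "B * B > 2 * 2"
    using assms(1) by (intro mult_strict_mono) auto
  then have "B\<^sup>2 - 4 > 0"
    by (simp add: power2_eq_square)
  then have "S \<ge> 0" and S_squared: "S\<^sup>2 = B\<^sup>2 - 4"
    unfolding S_def by simp_all
  then show "A > 1"
    using assms(1) unfolding A_def S_def[symmetric] by simp
  then show "A + 1 / A = B"
    using S_squared unfolding A_def S_def[symmetric] by (simp add: field_simps power2_eq_square)
qed

lemma cube_plus_inverse: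
  fixes C :: real
  assumes "C \<noteq> 0"
  shows "(C + 1 / C) ^ 3 = C ^ 3 + 1 / C ^ 3 + 3 * (C + 1 / C)"
  using assms by (simp add: field_simps power3_eq_cube)

lemma cardano_root:
  fixes D :: real
  assumes "D > 0"
  defines "C \<equiv> root 3 ((27 * D + 2 + sqrt ((27 * D + 2)\<^sup>2 - 4)) / 2)"
  defines "\<tau> \<equiv> 1/3 + 1/3 * (C + 1 / C)"
  shows "\<tau> ^ 3 - \<tau>\<^sup>2 = D" and "\<tau> > 1"
proof -
  define B where "B = 27 * D + 2"
  define A where "A = (B + sqrt (B\<^sup>2 - 4)) / 2"
  define s where "s = C + 1 / C"
  have "B > 2"
    using assms(1) B_def by simp
  then have A1: "A > 1" and A_inv: "A + 1 / A = B"
    unfolding A_def by (fact quadratic_root_plus_inverse)+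
  have CA: "C = root 3 A"
    unfolding C_def A_def B_def ..
  then have C1: "C > 1" and C3: "C ^ 3 = A"
    using A1 by (simp_all add: odd_real_root_pow)
  have s_cubed: "s ^ 3 = B + 3 * s"
    using cube_plus_inverse[of C] C1 C3 A_inv unfolding s_def by simp
  have \<tau>_s: "\<tau> = (1 + s) / 3"
    unfolding \<tau>_def s_def by simp
  have "\<tau> ^ 3 - \<tau>\<^sup>2 = (s ^ 3 - 3 * s - 2) / 27"
    unfolding \<tau>_s by (simp add: field_simps power3_eq_cube power2_eq_square)
  then show "\<tau> ^ 3 - \<tau>\<^sup>2 = D"
    using s_cubed B_def by simp
  have "s - 2 = (C - 1)\<^sup>2 / C"
    using C1 unfolding s_def by (simp add: field_simps power2_eq_square)
  moreover have "(C - 1)\<^sup>2 / C > 0"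
    using C1 by simp
  ultimately have "s > 2"
    by simp
  then show "\<tau> > 1"
    unfolding \<tau>_s by simp
qed

lemma cubic_root_gt_one:
  fixes t D :: real
  assumes "D > 0" and "t ^ 3 - t\<^sup>2 = D"
  shows "t > 1"
proof (rule ccontr)
  assume "\<not> t > 1"
  then have "t\<^sup>2 * (t - 1) \<le> 0"
    by (simp add: mult_nonneg_nonpos)
  then show False
    using assms by (simp add: algebra_simps power2_eq_square power3_eq_cube)
qed

lemma cubic_root_set_eq:
  fixes \<tau> D :: real
  assumes "D > 0" and "\<tau> ^ 3 - \<tau>\<^sup>2 = D"
  shows "{t. t ^ 3 - t\<^sup>2 - D = 0} = {\<tau>}"
proof (intro equalityI subsetI)
  fix t
  assume "t \<in> {t. t ^ 3 - t\<^sup>2 - D = 0}"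
  then have t_root: "t ^ 3 - t\<^sup>2 = D"
    by simp
  then have "t > 1" and "\<tau> > 1"
    using assms cubic_root_gt_one by blast+
  then have "t\<^sup>2 > t" and "\<tau>\<^sup>2 > \<tau>" and "t * \<tau> > 0"
    by (simp_all add: power2_eq_square)
  then have "t\<^sup>2 + t * \<tau> + \<tau>\<^sup>2 - t - \<tau> > 0"
    by linarith
  moreover have "(t - \<tau>) * (t\<^sup>2 + t * \<tau> + \<tau>\<^sup>2 - t - \<tau>) = 0"
    using assms(2) t_root by (simp add: algebra_simps power2_eq_square power3_eq_cube)
  ultimately show "t \<in> {\<tau>}"
    by simp
next
  fix t
  assume "t \<in> {\<tau>}"
  then show "t \<in> {t. t ^ 3 - t\<^sup>2 - D = 0}"
    using assms(2) by simp
qed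

lemma norm_diff_squared_radial_split:
  fixes z d :: "'a::real_inner"
  assumes "z \<noteq> 0" and "d \<noteq> 0"
  shows "(norm (z - d))\<^sup>2 = (norm z - norm d)\<^sup>2
          + norm d / norm z * (norm (z - (norm z / norm d) *\<^sub>R d))\<^sup>2"
proof -
  define r e where "r = norm z" and "e = norm d"
  have "r > 0" "e > 0"
    using assms r_def e_def by simp_all
  have zz: "inner z z = r\<^sup>2" and dd: "inner d d = e\<^sup>2"
    by (simp_all add: r_def e_def power2_norm_eq_inner)
  have z_minus_d: "(norm (z - d))\<^sup>2 = r\<^sup>2 - 2 * inner z d + e\<^sup>2"
    by (simp add: power2_norm_eq_inner inner_diff_left inner_diff_right zz dd inner_commute)
  have z_minus_ray: "(norm (z - (r / e) *\<^sub>R d))\<^sup>2 = r\<^sup>2 - 2 * (r / e) * inner z d + (r / e)\<^sup>2 * e\<^sup>2"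
  proof -
    have "(norm (z - (r / e) *\<^sub>R d))\<^sup>2 = inner (z - (r / e) *\<^sub>R d) (z - (r / e) *\<^sub>R d)"
      by (simp add: power2_norm_eq_inner)
    also have "\<dots> = inner z z - 2 * (r / e) * inner z d + (r / e)\<^sup>2 * inner d d"
      by (simp add: inner_diff_left inner_diff_right inner_commute power2_eq_square algebra_simps)
    finally show ?thesis
      by (simp add: zz dd)
  qed
  show ?thesis
    unfolding r_def[symmetric] e_def[symmetric] z_minus_d z_minus_ray
    using \<open>r > 0\<close> \<open>e > 0\<close> by (simp add: field_simps power2_eq_square)
qed

definition radial_objective :: "real \<Rightarrow> real \<Rightarrow> real" where
  "radial_objective D t = D / t + (t - 1)\<^sup>2 / 2"

lemma proximal_objective_radial_split:
  fixes z d :: "'a::real_inner" and c \<rho> D :: real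
  assumes "z \<noteq> 0" and "d \<noteq> 0" and "c = D * \<rho> * norm d ^ 3"
  shows "c / norm z + \<rho> / 2 * (norm (z - d))\<^sup>2
       = \<rho> * (norm d)\<^sup>2 * radial_objective D (norm z / norm d)
         + \<rho> * norm d / (2 * norm z) * (norm (z - (norm z / norm d) *\<^sub>R d))\<^sup>2"
  unfolding norm_diff_squared_radial_split[OF assms(1,2)] radial_objective_def
  using assms by (simp add: field_simps power2_eq_square power3_eq_cube)

lemma radial_objective_strict_min:
  fixes t \<tau> D :: real
  assumes "t > 0" and "\<tau> > 1" and "\<tau> ^ 3 - \<tau>\<^sup>2 = D" and "t \<noteq> \<tau>"
  shows "radial_objective D \<tau> < radial_objective D t"
proof -
  have "radial_objective D t - radial_objective D \<tau> = (t - \<tau>)\<^sup>2 * (t + 2 * \<tau> - 2) / (2 * t)"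
    using assms(1-3) unfolding radial_objective_def
    by (simp add: field_simps power2_eq_square power3_eq_cube) algebra
  moreover have "(t - \<tau>)\<^sup>2 * (t + 2 * \<tau> - 2) / (2 * t) > 0"
    using assms(1,2,4) by simp
  ultimately show ?thesis
    by linarith
qed

lemma proximal_objective_strict_min:
  fixes z d :: "'a::real_inner" and c \<rho> \<tau> :: real
  assumes "\<rho> > 0" and "d \<noteq> 0" and "\<tau> > 1"
    and "\<tau> ^ 3 - \<tau>\<^sup>2 = c / (\<rho> * norm d ^ 3)"
    and "z \<noteq> 0" and "z \<noteq> \<tau> *\<^sub>R d"
  defines "f \<equiv> \<lambda>y. c / norm y + \<rho> / 2 * (norm (y - d))\<^sup>2"
  shows "f (\<tau> *\<^sub>R d) < f z"
proof -
  define D where "D = c / (\<rho> * norm d ^ 3)"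
  define t where "t = norm z / norm d"
  define q where "q = \<rho> * norm d / (2 * norm z) * (norm (z - t *\<^sub>R d))\<^sup>2"
  have cD: "c = D * \<rho> * norm d ^ 3"
    using assms(1,2) D_def by simp
  have scale: "\<rho> * (norm d)\<^sup>2 > 0"
    using assms(1,2) by simp
  have "\<tau> *\<^sub>R d \<noteq> 0" and \<tau>_ratio: "norm (\<tau> *\<^sub>R d) / norm d = \<tau>"
    using assms(2,3) by simp_all
  from proximal_objective_radial_split[OF this(1) assms(2) cD]
  have f_opt: "f (\<tau> *\<^sub>R d) = \<rho> * (norm d)\<^sup>2 * radial_objective D \<tau>"
    unfolding f_def \<tau>_ratio by simp
  have f_z: "f z = \<rho> * (norm d)\<^sup>2 * radial_objective D t + q"
    using proximal_objective_radial_split[OF assms(5,2) cD] unfolding f_def t_def q_def by simp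
  show ?thesis
  proof (cases "t = \<tau>")
    case True
    then have "norm (z - t *\<^sub>R d) > 0"
      using assms(6) by simp
    then have "q > 0"
      using assms(1,2,5) unfolding q_def by simp
    then show ?thesis
      using f_opt f_z True by simp
  next
    case False
    have "t > 0"
      using assms(2,5) t_def by simp
    then have "radial_objective D \<tau> < radial_objective D t"
      using radial_objective_strict_min[OF _ assms(3) _ False] assms(4) D_def by simp
    then have "\<rho> * (norm d)\<^sup>2 * radial_objective D \<tau> < \<rho> * (norm d)\<^sup>2 * radial_objective D t"
      using scale by (rule mult_strict_left_mono)
    moreover have "q \<ge> 0"
      using assms(1) unfolding q_def by simp
    ultimately show ?thesis
      using f_opt f_z by simp
  qed
qed
lemma unique_minimizer_set_eq:
  assumes "P x" and "\<And>z. P z \<Longrightarrow> z \<noteq> x \<Longrightarrow> f x < f z"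
  shows "{y. P y \<and> (\<forall>z. P z \<longrightarrow> (f y :: 'b::linorder) \<le> f z)} = {x}"
proof (intro equalityI subsetI)
  fix y
  assume "y \<in> {y. P y \<and> (\<forall>z. P z \<longrightarrow> f y \<le> f z)}"
  then have "P y" and "f y \<le> f x"
    using assms(1) by simp_all
  then show "y \<in> {x}"
    using assms(2)[of y] by (cases "y = x") simp_all
next
  fix y
  assume "y \<in> {x}"
  moreover have "f x \<le> f z" if "P z" for z
    using assms(2)[OF that] by (cases "z = x") simp_all
  ultimately show "y \<in> {y. P y \<and> (\<forall>z. P z \<longrightarrow> f y \<le> f z)}"
    using assms(1) by simp
qed

theorem mainTheorem6:
  fixes c \<rho> :: real and d :: "real ^ 'n"
  assumes "c > 0" and "\<rho> > 0" and "norm d > 0"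
  defines "\<eta> \<equiv> norm d"
  defines "D \<equiv> c / (\<rho> * \<eta> ^ 3)"
  defines "C \<equiv> root 3 ((27 * D + 2 + sqrt ((27 * D + 2)\<^sup>2 - 4)) / 2)"
  defines "\<tau> \<equiv> 1/3 + 1/3 * (C + 1 / C)"
  defines "f \<equiv> (\<lambda>y :: real ^ 'n. c / norm y + \<rho> / 2 * (norm (y - d))\<^sup>2)"
  shows "{t :: real. t ^ 3 - t\<^sup>2 - D = 0} = {\<tau>} \<and> \<tau> > 0 \<and>
         {y. y \<noteq> 0 \<and> (\<forall>z. z \<noteq> 0 \<longrightarrow> f y \<le> f z)} = {\<tau> *\<^sub>R d}"
proof -
  have d: "d \<noteq> 0"
    using assms(3) by simp
  have "D > 0"
    unfolding D_def \<eta>_def using assms by simp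
  then have root: "\<tau> ^ 3 - \<tau>\<^sup>2 = D" and \<tau>1: "\<tau> > 1"
    unfolding \<tau>_def C_def by (fact cardano_root)+
  have "f (\<tau> *\<^sub>R d) < f z" if "z \<noteq> 0" "z \<noteq> \<tau> *\<^sub>R d" for z
    using proximal_objective_strict_min[OF assms(2) d \<tau>1 _ that] root
    unfolding f_def D_def \<eta>_def by simp
  moreover have "\<tau> *\<^sub>R d \<noteq> 0"
    using d \<tau>1 by simp
  ultimately have "{y. y \<noteq> 0 \<and> (\<forall>z. z \<noteq> 0 \<longrightarrow> f y \<le> f z)} = {\<tau> *\<^sub>R d}"
    by (rule unique_minimizer_set_eq[rotated])
  then show ?thesis
    using cubic_root_set_eq[OF \<open>D > 0\<close> root] \<tau>1 by simp
qed

end
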